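(* Let $k$ and $M$ be positive integers, and let $M=p_{1}^{e_{1}}p_{2}^{e_{2}}\cdots p_{l}^{e_{l}}$ be the prime factorization of $M$, where $p_1,\dots,p_l$ are distinct primes. For any integer $n\geq \max\{e_j\mid 1\le j\le l\}$, \[ \sum_{i=0}^{\varphi(M)-1}B^{(-k)}_{n+i}\equiv \sum_{i=0}^{\varphi(M)-1}B^{(-n-i)}_{k}\equiv 0\pmod{M}. \]
   Context: For any integer $k$, let $\mathrm{Li}_k(t)=\sum_{n=1}^{\infty} t^n/n^k$. The poly-Bernoulli numbers $B^{(k)}_n$ ($n\ge 0$) are defined by $\frac{\mathrm{Li}_k(1-e^{-t})}{1-e^{-t}}=\sum_{n=0}^{\infty}B^{(k)}_n\frac{t^n}{n!}$. For negative upper index these are integers. $\varphi$ denotes Euler's totient function. *)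

theory Defs
  imports "HOL-Computational_Algebra.Formal_Power_Series" "HOL-Number_Theory.Number_Theory"
begin

text \<open>The formal power series Li_k(x)/x = sum over m of x^m/(m+1)^k, for any integer k.\<close>
definition Li_over_x :: "int \<Rightarrow> real fps" where
  "Li_over_x k = Abs_fps (\<lambda>m. 1 / (real (m + 1)) powi k)"

text \<open>Poly-Bernoulli numbers: Li_k(1-e^{-t})/(1-e^{-t}) = sum of B_n^(k) t^n/n!.\<close>
definition polyB :: "int \<Rightarrow> nat \<Rightarrow> real" where
  "polyB k n = fact n * fps_nth (fps_compose (Li_over_x k) (1 - fps_exp (-1))) n"

end

theory Submission
  imports Defs "HOL-Combinatorics.Stirling"
begin

(* Writing S(k,m) for Stirling numbers of the second kind, there are two expansions
     B_n^(-k) = sum_{m<=n} (-1)^(n+m) m! S(n,m) (m+1)^k = sum_{m<=k} (-1)^(k+m) m! S(k,m) (m+1)^n.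
   The first comes from the coefficients of (1 - e^(-t))^m, the second from writing
   Li_{-k}(1 - e^(-t)) / (1 - e^(-t)) as a combination of the exponentials e^((m+1)t).
   Together they give the duality B_n^(-k) = B_k^(-n), so both sums coincide.
   Summing the second expansion over n, ..., n + phi(M) - 1 turns the term of index m into
   (-1)^(k+m) (m! S(k,m) / m) (m+1)^n ((m+1)^phi(M) - 1), where m divides m! S(k,m) because
   k > 0.  Finally M divides a^n (a^phi(M) - 1) for every a: a prime power p^e exactly dividing
   M divides a^n if p divides a, since e <= n, and divides a^phi(M) - 1 otherwise, by Euler. *)

unbundle fps_syntax

definition signed_fact_Stirling :: "nat \<Rightarrow> nat \<Rightarrow> 'a::{comm_ring_1,ring_char_0}" where
  "signed_fact_Stirling k m = (-1) ^ (k + m) * fact m * of_nat (Stirling k m)"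

lemma signed_fact_Stirling_0_left: "signed_fact_Stirling 0 m = (if m = 0 then 1 else 0)"
  by (cases m) (simp_all add: signed_fact_Stirling_def)

lemma signed_fact_Stirling_Suc_0 [simp]: "signed_fact_Stirling (Suc k) 0 = 0"
  by (simp add: signed_fact_Stirling_def)

lemma signed_fact_Stirling_less: "k < m \<Longrightarrow> signed_fact_Stirling k m = 0"
  by (simp add: signed_fact_Stirling_def)

lemma signed_fact_Stirling_Suc_Suc:
  "signed_fact_Stirling (Suc k) (Suc m) =
     of_nat (Suc m) * (signed_fact_Stirling k m - signed_fact_Stirling k (Suc m))"
  by (simp add: signed_fact_Stirling_def algebra_simps)

lemma of_int_signed_fact_Stirling [simp]:
  "of_int (signed_fact_Stirling k m) = signed_fact_Stirling k m"
  by (simp add: signed_fact_Stirling_def)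

lemma fact_mult_nth_power_one_minus_fps_exp_neg:
  "fact N * ((1 - fps_exp (-1)) ^ m) $ N = (signed_fact_Stirling N m :: 'a::field_char_0)"
proof (induction N arbitrary: m)
  case 0
  then show ?case by (cases m) (simp_all add: fps_power_zeroth signed_fact_Stirling_0_left)
next
  case (Suc N)
  show ?case
  proof (cases m)
    case 0
    then show ?thesis by simp
  next
    case (Suc j)
    let ?E = "1 - fps_exp (-1) :: 'a fps"
    have "fps_deriv ?E = 1 - ?E"
      by (simp flip: fps_const_neg)
    then have "fps_deriv (?E ^ Suc j) = fps_const (of_nat (Suc j)) * (1 - ?E) * ?E ^ j"
      by (simp only: fps_deriv_power) simp
    then have "fps_deriv (?E ^ Suc j) = fps_const (of_nat (Suc j)) * (?E ^ j - ?E ^ Suc j)"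
      by (simp only: right_diff_distrib mult.assoc power_Suc left_diff_distrib mult_1_left)
    then have "fps_deriv (?E ^ Suc j) $ N =
        (fps_const (of_nat (Suc j)) * (?E ^ j - ?E ^ Suc j)) $ N"
      by (rule arg_cong)
    then have "of_nat (Suc N) * (?E ^ Suc j) $ Suc N =
        of_nat (Suc j) * ((?E ^ j) $ N - (?E ^ Suc j) $ N)"
      by (simp only: fps_deriv_nth fps_mult_left_const_nth fps_sub_nth Suc_eq_plus1)
    then have "fact (Suc N) * (?E ^ Suc j) $ Suc N =
        of_nat (Suc j) * (fact N * (?E ^ j) $ N - fact N * (?E ^ Suc j) $ N)"
      by (simp add: mult_ac right_diff_distrib)
    then show ?thesis
      by (simp only: Suc.IH \<open>m = Suc j\<close> signed_fact_Stirling_Suc_Suc)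
  qed
qed

lemma Li_over_x_neg_nth: "Li_over_x (- int k) $ m = (real m + 1) ^ k"
  by (simp add: Li_over_x_def power_int_minus divide_inverse add.commute)

lemma polyB_neg_Stirling_expansion:
  "polyB (- int k) n = (\<Sum>m\<le>n. signed_fact_Stirling n m * (real m + 1) ^ k)"
  by (simp add: polyB_def fps_compose_nth Li_over_x_neg_nth sum_distrib_left atLeast0AtMost
      fact_mult_nth_power_one_minus_fps_exp_neg mult.left_commute[of "fact n"] mult.commute)

(* Since d/dt = e^(-t) d/dx under x = 1 - e^(-t), this is f |-> (d/dx)(x f) on the x-side;
   it sends Li_{-k}(x)/x to Li_{-k-1}(x)/x. *)
definition subst_deriv_X_mult :: "'a::field_char_0 fps \<Rightarrow> 'a fps" where
  "subst_deriv_X_mult f = fps_exp 1 * fps_deriv ((1 - fps_exp (-1)) * f)"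

lemma subst_deriv_X_mult_sum:
  "subst_deriv_X_mult (\<Sum>i\<in>A. fps_const (c i) * f i) =
     (\<Sum>i\<in>A. fps_const (c i) * subst_deriv_X_mult (f i))"
  by (simp add: subst_deriv_X_mult_def sum_distrib_left fps_deriv_sum mult.left_commute)

lemma subst_deriv_X_mult_fps_exp:
  "subst_deriv_X_mult (fps_exp (c + 1)) =
     fps_const (c + 1) * fps_exp (c + 2) - fps_const c * fps_exp (c + 1)"
proof -
  have "(1 - fps_exp (-1)) * fps_exp (c + 1) = fps_exp (c + 1) - fps_exp c"
    by (simp add: algebra_simps flip: fps_exp_add_mult)
  then have "subst_deriv_X_mult (fps_exp (c + 1)) = fps_exp 1 * fps_deriv (fps_exp (c + 1) - fps_exp c)"
    by (simp only: subst_deriv_X_mult_def)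
  also have "\<dots> =
      fps_const (c + 1) * (fps_exp 1 * fps_exp (c + 1)) - fps_const c * (fps_exp 1 * fps_exp c)"
    by (simp add: algebra_simps)
  also have "fps_exp 1 * fps_exp (c + 1) = fps_exp (c + 2)"
    by (simp flip: fps_exp_add_mult add: add.commute one_add_one)
  also have "fps_exp 1 * fps_exp c = fps_exp (c + 1)"
    by (simp flip: fps_exp_add_mult add: add.commute)
  finally show ?thesis .
qed

lemma subst_deriv_X_mult_Stirling_sum:
  "subst_deriv_X_mult (\<Sum>m\<le>k. fps_const (signed_fact_Stirling k m) * fps_exp (of_nat m + 1)) =
     (\<Sum>m\<le>Suc k. fps_const (signed_fact_Stirling (Suc k) m) * fps_exp (of_nat m + 1)
       :: 'a::field_char_0 fps)"
proof -
  let ?c = "signed_fact_Stirling k :: nat \<Rightarrow> 'a"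
  define u where "u m = fps_const (?c m * of_nat m) * fps_exp (of_nat m + 1)" for m
  have "subst_deriv_X_mult (\<Sum>m\<le>k. fps_const (?c m) * fps_exp (of_nat m + 1)) =
      (\<Sum>m\<le>k. fps_const (?c m) * (fps_const (of_nat m + 1) * fps_exp (of_nat m + 2) -
        fps_const (of_nat m) * fps_exp (of_nat m + 1)))"
    by (simp only: subst_deriv_X_mult_sum subst_deriv_X_mult_fps_exp)
  also have "\<dots> =
      (\<Sum>m\<le>k. fps_const (?c m * (of_nat m + 1)) * fps_exp (of_nat m + 2)) - (\<Sum>m\<le>k. u m)"
    by (simp only: right_diff_distrib sum_subtractf u_def mult.assoc[symmetric] fps_const_mult)
  also have "(\<Sum>m\<le>k. u m) = (\<Sum>m\<le>k. u (Suc m))"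
    using sum.atMost_Suc_shift[of u k] by (simp add: u_def signed_fact_Stirling_less)
  also have "(\<Sum>m\<le>k. fps_const (?c m * (of_nat m + 1)) * fps_exp (of_nat m + 2)) -
      (\<Sum>m\<le>k. u (Suc m)) =
      (\<Sum>m\<le>k. fps_const (signed_fact_Stirling (Suc k) (Suc m)) * fps_exp (of_nat (Suc m) + 1))"
  proof (subst sum_subtractf [symmetric], intro sum.cong refl)
    fix m
    have "of_nat (Suc m) + 1 = (of_nat m + 2 :: 'a)"
      by (simp add: add.assoc)
    moreover have "?c m * (of_nat m + 1) - ?c (Suc m) * of_nat (Suc m) =
        signed_fact_Stirling (Suc k) (Suc m)"
      by (simp add: signed_fact_Stirling_Suc_Suc algebra_simps)
    ultimately show "fps_const (?c m * (of_nat m + 1)) * fps_exp (of_nat m + 2) - u (Suc m) =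
        fps_const (signed_fact_Stirling (Suc k) (Suc m)) * fps_exp (of_nat (Suc m) + 1)"
      by (simp only: u_def fps_const_sub flip: left_diff_distrib)
  qed
  also have "\<dots> = (\<Sum>m\<le>Suc k. fps_const (signed_fact_Stirling (Suc k) m) * fps_exp (of_nat m + 1))"
    by (subst sum.atMost_Suc_shift) simp
  finally show ?thesis .
qed

lemma fps_exp_neg_one_mult_fps_exp_one: "fps_exp (-1) * fps_exp 1 = (1 :: 'a::field_char_0 fps)"
  by (simp flip: fps_exp_add_mult)

lemma Li_over_x_0_compose: "Li_over_x 0 oo (1 - fps_exp (-1)) = fps_exp 1"
proof -
  let ?E = "1 - fps_exp (-1) :: real fps"
  have "Li_over_x 0 * (1 - fps_X) = 1"
    by (rule fps_ext) (simp add: Li_over_x_def algebra_simps)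
  then have "(Li_over_x 0 oo ?E) * ((1 - fps_X) oo ?E) = 1"
    by (simp flip: fps_compose_mult_distrib)
  then have "(Li_over_x 0 oo ?E) * fps_exp (-1) = 1"
    by (simp add: fps_compose_sub_distrib)
  then have "(Li_over_x 0 oo ?E) * (fps_exp (-1) * fps_exp 1) = fps_exp 1"
    by (simp only: mult.assoc [symmetric] mult_1_left)
  then show ?thesis
    by (simp only: fps_exp_neg_one_mult_fps_exp_one mult_1_right)
qed

lemma Li_over_x_neg_Suc_compose:
  "Li_over_x (- int (Suc k)) oo (1 - fps_exp (-1)) =
     subst_deriv_X_mult (Li_over_x (- int k) oo (1 - fps_exp (-1)))"
proof -
  let ?E = "1 - fps_exp (-1) :: real fps"
  have "fps_deriv (fps_X * Li_over_x (- int k)) = Li_over_x (- int (Suc k))"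
    by (rule fps_ext) (simp only: fps_deriv_nth fps_X_mult_nth Li_over_x_neg_nth, simp)
  moreover have "?E * (Li_over_x (- int k) oo ?E) = (fps_X * Li_over_x (- int k)) oo ?E"
    by (simp add: fps_compose_mult_distrib)
  moreover have "fps_deriv ?E = fps_exp (-1)"
    by (simp flip: fps_const_neg)
  ultimately have "fps_deriv (?E * (Li_over_x (- int k) oo ?E)) =
      (Li_over_x (- int (Suc k)) oo ?E) * fps_exp (-1)"
    by (simp add: fps_compose_deriv)
  then show ?thesis
    by (simp only: subst_deriv_X_mult_def mult.commute [of "fps_exp 1"] mult.assoc
        fps_exp_neg_one_mult_fps_exp_one mult_1_right)
qed

lemma Li_over_x_neg_compose:
  "Li_over_x (- int k) oo (1 - fps_exp (-1)) =
     (\<Sum>m\<le>k. fps_const (signed_fact_Stirling k m) * fps_exp (of_nat m + 1))"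
proof (induction k)
  case 0
  then show ?case
    by (simp add: Li_over_x_0_compose signed_fact_Stirling_0_left)
next
  case (Suc k)
  then show ?case
    by (simp only: Li_over_x_neg_Suc_compose subst_deriv_X_mult_Stirling_sum)
qed

lemma polyB_neg_Stirling_expansion_dual:
  "polyB (- int k) n = (\<Sum>m\<le>k. signed_fact_Stirling k m * (real m + 1) ^ n)"
  by (simp add: polyB_def Li_over_x_neg_compose fps_sum_nth sum_distrib_left add.commute)

lemma polyB_neg_duality: "polyB (- int k) n = polyB (- int n) k"
  by (simp only: polyB_neg_Stirling_expansion_dual [of k n] polyB_neg_Stirling_expansion [of n k])

lemma prime_power_dvd_power_mult_power_totient_minus_one:
  fixes p e M n a :: nat
  assumes "prime p" and "p ^ e dvd M" and "e \<le> n"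
  shows "p ^ e dvd a ^ n * (a ^ totient M - 1)"
proof (cases "p dvd a")
  case True
  then have "p ^ e dvd a ^ n"
    using \<open>e \<le> n\<close> by (rule dvd_power_le)
  then show ?thesis
    by (rule dvd_mult2)
next
  case False
  then have "coprime a (p ^ e)"
    using \<open>prime p\<close> by (simp add: prime_imp_coprime_nat coprime_commute [of a])
  then have "[a ^ totient (p ^ e) = 1] (mod p ^ e)"
    by (rule euler_theorem)
  moreover obtain j where "totient M = totient (p ^ e) * j"
    using totient_dvd [OF \<open>p ^ e dvd M\<close>] by blast
  ultimately have "[a ^ totient M = 1] (mod p ^ e)"
    by (metis cong_pow power_mult power_one)
  then have "p ^ e dvd a ^ totient M - 1"
    by (rule cong_to_1_nat)
  then show ?thesis
    by (rule dvd_mult)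
qed

lemma dvd_power_mult_power_totient_minus_one:
  fixes M n a :: nat
  assumes "M > 0" and "\<And>p. p \<in> prime_factors M \<Longrightarrow> multiplicity p M \<le> n"
  shows "M dvd a ^ n * (a ^ totient M - 1)"
proof (cases "a ^ n * (a ^ totient M - 1) = 0")
  case False
  show ?thesis
  proof (rule multiplicity_le_imp_dvd)
    fix p :: nat
    assume "prime p"
    have "p ^ multiplicity p M dvd a ^ n * (a ^ totient M - 1)"
    proof (cases "multiplicity p M = 0")
      case False
      then have "multiplicity p M \<le> n"
        using \<open>prime p\<close> \<open>M > 0\<close> assms(2) by (simp add: prime_factors_multiplicity)
      with \<open>prime p\<close> multiplicity_dvd show ?thesis
        by (rule prime_power_dvd_power_mult_power_totient_minus_one)
    qed simp
    then show "multiplicity p M \<le> multiplicity p (a ^ n * (a ^ totient M - 1))"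
      using False \<open>prime p\<close> by (intro multiplicity_geI) auto
  qed (use \<open>M > 0\<close> in simp)
qed (simp only: dvd_0_right)

lemma dvd_sum_signed_fact_Stirling_mult_powers:
  fixes k M n m :: nat
  assumes "k > 0" and "M > 0" and "\<And>p. p \<in> prime_factors M \<Longrightarrow> multiplicity p M \<le> n"
  shows "int M dvd (\<Sum>i<totient M. signed_fact_Stirling k m * (int m + 1) ^ (n + i))"
proof (cases m)
  case 0
  then show ?thesis
    using \<open>k > 0\<close> by (cases k) simp_all
next
  case (Suc j)
  let ?a = "int m + 1"
  have "M dvd (m + 1) ^ n * ((m + 1) ^ totient M - 1)"
    using assms(2,3) by (rule dvd_power_mult_power_totient_minus_one)
  then have "int M dvd ?a ^ n * (?a ^ totient M - 1)"
    by (simp add: of_nat_diff add.commute flip: int_dvd_int_iff)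
  moreover have "(\<Sum>i<totient M. signed_fact_Stirling k m * ?a ^ (n + i)) =
      (-1) ^ (k + m) * fact j * int (Stirling k m) * (?a ^ n * (int m * (\<Sum>i<totient M. ?a ^ i)))"
    by (simp add: Suc signed_fact_Stirling_def sum_distrib_left power_add mult_ac)
  moreover have "int m * (\<Sum>i<totient M. ?a ^ i) = ?a ^ totient M - 1"
    by (simp add: power_diff_1_eq)
  ultimately show ?thesis
    by simp
qed

theorem corollary3p7:
  fixes k M n :: nat
  assumes "k > 0" and "M > 0"
    and "\<And>p. p \<in> prime_factors M \<Longrightarrow> multiplicity p M \<le> n"
  shows "(\<exists>z::int. (\<Sum>i<totient M. polyB (- int k) (n + i)) = of_int (int M * z))
       \<and> (\<exists>z::int. (\<Sum>i<totient M. polyB (- int (n + i)) k) = of_int (int M * z))"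
proof -
  have "int M dvd (\<Sum>m\<le>k. \<Sum>i<totient M. signed_fact_Stirling k m * (int m + 1) ^ (n + i))"
    using assms by (intro dvd_sum dvd_sum_signed_fact_Stirling_mult_powers)
  then obtain z where
    z: "(\<Sum>m\<le>k. \<Sum>i<totient M. signed_fact_Stirling k m * (int m + 1) ^ (n + i)) = int M * z"
    by (rule dvdE)
  have "(\<Sum>i<totient M. polyB (- int k) (n + i)) =
      of_int (\<Sum>m\<le>k. \<Sum>i<totient M. signed_fact_Stirling k m * (int m + 1) ^ (n + i))"
    by (subst sum.swap) (simp add: polyB_neg_Stirling_expansion_dual)
  then have "(\<Sum>i<totient M. polyB (- int k) (n + i)) = of_int (int M * z)"
    by (simp only: z)
  moreover have "(\<Sum>i<totient M. polyB (- int (n + i)) k) = (\<Sum>i<totient M. polyB (- int k) (n + i))"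
    by (simp only: polyB_neg_duality)
  ultimately show ?thesis
    by auto
qed

end
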